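(* In the supersample construction described in the context, for every $i=1,\dots,n$, $$I(W;R_i\mid Z_i^\pm)\le I(W;R_i\mid Z^\pm_{[n]}).$$
   Context: Let $\xi$ be a distribution on a data space $\mathcal Z$ and $P_{W|Z_{[n]}}$ a Markov kernel from $\mathcal Z^n$ to a parameter space $\mathcal W$ (a learning algorithm). Supersample construction: $Z_i^-,Z_i^+$ ($i=1,\dots,n$) are $2n$ i.i.d. samples from $\xi$, $Z_i^\pm=(Z_i^-,Z_i^+)$, $Z^\pm_{[n]}=(Z_1^\pm,\dots,Z_n^\pm)$; $R_1,\dots,R_n$ are i.i.d. uniform on $\{-1,1\}$, independent of the samples; $W$ is the output of $P_{W|Z_{[n]}}$ on the training vector $(Z_1^{R_1},\dots,Z_n^{R_n})$, where $Z_i^{1}=Z_i^+$ and $Z_i^{-1}=Z_i^-$. *)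

theory Defs
  imports "HOL-Probability.Probability"
begin

definition cond_prob :: "'a measure \<Rightarrow> 'd measure \<Rightarrow> ('a \<Rightarrow> 'd) \<Rightarrow> 'a set \<Rightarrow> 'a \<Rightarrow> real" where
  "cond_prob M MZ Z E = real_cond_exp M (vimage_algebra (space M) Z MZ) (indicator E)"

definition finite_meas_partition :: "'b measure \<Rightarrow> 'b set set \<Rightarrow> bool" where
  "finite_meas_partition MX P \<longleftrightarrow>
     finite P \<and> P \<subseteq> sets MX \<and> disjoint P \<and> \<Union>P = space MX"

definition kl_term :: "real \<Rightarrow> real \<Rightarrow> real \<Rightarrow> real" where
  "kl_term p q r = (if p \<le> 0 then 0 else p * ln (p / (q * r)))"

text \<open>Conditional mutual information I(X;Y|Z), defined in full generality as the supremum,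
  over finite measurable partitions of the ranges of X and Y, of the conditional mutual
  information of the quantised variables given Z (Dobrushin/Pinsker/Gray definition).\<close>
definition cmi :: "'a measure \<Rightarrow> 'b measure \<Rightarrow> 'c measure \<Rightarrow> 'd measure \<Rightarrow>
    ('a \<Rightarrow> 'b) \<Rightarrow> ('a \<Rightarrow> 'c) \<Rightarrow> ('a \<Rightarrow> 'd) \<Rightarrow> ennreal" where
  "cmi M MX MY MZ X Y Z =
     (SUP PQ \<in> {(P, Q). finite_meas_partition MX P \<and> finite_meas_partition MY Q}.
        \<integral>\<^sup>+ \<omega>. ennreal (\<Sum>A\<in>fst PQ. \<Sum>B\<in>snd PQ.
            kl_term (cond_prob M MZ Z {x \<in> space M. X x \<in> A \<and> Y x \<in> B} \<omega>)
                    (cond_prob M MZ Z {x \<in> space M. X x \<in> A} \<omega>)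
                    (cond_prob M MZ Z {x \<in> space M. Y x \<in> B} \<omega>)) \<partial>M)"

definition rademacher :: "int measure" where
  "rademacher = measure_pmf (pmf_of_set {-1, 1})"

definition train :: "nat set \<Rightarrow> (nat \<Rightarrow> 'z) \<Rightarrow> (nat \<Rightarrow> 'z) \<Rightarrow> (nat \<Rightarrow> int) \<Rightarrow> nat \<Rightarrow> 'z" where
  "train I zm zp r = (\<lambda>j\<in>I. if r j = 1 then zp j else zm j)"

text \<open>Joint law of (Z^-_{[n]}, Z^+_{[n]}, R_{[n]}, W): the 2n samples are iid xi, the R_j are iid
  uniform on {-1,1} independent of the samples, and W is drawn from the kernel K applied to the
  training vector.\<close>
definition supersample_law ::
    "'z measure \<Rightarrow> 'w measure \<Rightarrow> ((nat \<Rightarrow> 'z) \<Rightarrow> 'w measure) \<Rightarrow> nat \<Rightarrow>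
     ((nat \<Rightarrow> 'z) \<times> (nat \<Rightarrow> 'z) \<times> (nat \<Rightarrow> int) \<times> 'w) measure" where
  "supersample_law \<xi> MW K n =
     bind (PiM {1..n} (\<lambda>_. \<xi>) \<Otimes>\<^sub>M (PiM {1..n} (\<lambda>_. \<xi>) \<Otimes>\<^sub>M PiM {1..n} (\<lambda>_. rademacher)))
       (\<lambda>(zm, zp, r). distr (K (train {1..n} zm zp r))
          (PiM {1..n} (\<lambda>_. \<xi>) \<Otimes>\<^sub>M (PiM {1..n} (\<lambda>_. \<xi>) \<Otimes>\<^sub>M (PiM {1..n} (\<lambda>_. rademacher) \<Otimes>\<^sub>M MW)))
          (\<lambda>w. (zm, zp, r, w)))"

end

theory Submission
  imports Defs
begin

text \<open>Conditioning on a \<sigma>-algebra \<open>F\<close>, the quantity maximised in \<open>cmi\<close> is the integral of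
  \<open>\<Sum>A B. p\<^sub>A\<^sub>B ln (p\<^sub>A\<^sub>B / (q\<^sub>A r\<^sub>B))\<close>, where \<open>p, q, r\<close> are the \<open>F\<close>-conditional probabilities
  of \<open>{W \<in> A, R\<^sub>i \<in> B}\<close>, \<open>{W \<in> A}\<close> and \<open>{R\<^sub>i \<in> B}\<close>. The selector \<open>R\<^sub>i\<close> is independent of the whole
  supersample, so for both \<open>G = \<sigma>(Z\<^sub>i\<^sup>\<plusminus>) \<subseteq> H = \<sigma>(Z\<^sub>1\<^sup>\<plusminus>, \<dots>, Z\<^sub>n\<^sup>\<plusminus>)\<close> the factor \<open>r\<^sub>B\<close> is the constant
  \<open>P(R\<^sub>i \<in> B)\<close>. By the tower property the \<open>G\<close>-probabilities are conditional expectations of the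
  \<open>H\<close>-probabilities, and \<open>(p, q) \<mapsto> p ln (p / (q c))\<close> is jointly convex, so the conditional Jensen
  inequality compares the two integrals term by term. Gibbs' inequality makes both integrands
  nonnegative, so passing to the \<open>ennreal\<close>-valued integrals of \<open>cmi\<close> loses nothing.\<close>

section \<open>Elementary inequalities for \<open>kl_term\<close>\<close>

lemma ln_ge_one_minus_inverse: "0 < (x::real) \<Longrightarrow> 1 - 1 / x \<le> ln x"
  using ln_le_minus_one[of "1 / x"] by (simp add: ln_div)

lemma kl_term_ge_diff:
  assumes "0 \<le> p" "0 \<le> q" "0 \<le> c" "0 < p \<Longrightarrow> 0 < q \<and> 0 < c"
  shows "p - q * c \<le> kl_term p q c"
proof (cases "p = 0")
  case False
  then have "0 < p" "0 < q" "0 < c" using assms by auto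
  then have "p - q * c = p * (1 - 1 / (p / (q * c)))"
    by (simp add: field_simps)
  also have "\<dots> \<le> p * ln (p / (q * c))"
    using \<open>0 < p\<close> \<open>0 < q\<close> \<open>0 < c\<close> by (intro mult_left_mono ln_ge_one_minus_inverse) auto
  also have "\<dots> = kl_term p q c"
    using \<open>0 < p\<close> by (simp add: kl_term_def)
  finally show ?thesis .
qed (use assms in \<open>simp add: kl_term_def\<close>)

text \<open>The tangent plane at \<open>(p\<^sub>0, q\<^sub>0)\<close> of the convex function \<open>(p, q) \<mapsto> p ln (p / (q c))\<close>
  lies below it: the difference is \<open>kl_term p q (p\<^sub>0 / q\<^sub>0) - (p - q p\<^sub>0 / q\<^sub>0)\<close>.\<close>
lemma kl_term_ge_tangent:
  assumes "0 < c" "0 < p\<^sub>0" "p\<^sub>0 \<le> q\<^sub>0" "0 \<le> p" "p \<le> q"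
  shows "p * (ln (p\<^sub>0 / (q\<^sub>0 * c)) + 1) - q * p\<^sub>0 / q\<^sub>0 \<le> kl_term p q c"
proof (cases "p = 0")
  case False
  then have pos: "0 < p" "0 < q" "0 < q\<^sub>0" using assms by auto
  have "p - q * (p\<^sub>0 / q\<^sub>0) \<le> kl_term p q (p\<^sub>0 / q\<^sub>0)"
    using pos assms by (intro kl_term_ge_diff) auto
  moreover have "kl_term p q (p\<^sub>0 / q\<^sub>0) = kl_term p q c - p * ln (p\<^sub>0 / (q\<^sub>0 * c))"
    using pos assms by (simp add: kl_term_def ln_div ln_mult algebra_simps)
  ultimately show ?thesis by (simp add: algebra_simps)
qed (use assms in \<open>simp add: kl_term_def\<close>)

lemma abs_kl_term_le_1:
  assumes "0 \<le> p" "p \<le> q" "q \<le> 1" "p \<le> r" "r \<le> 1"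
  shows "\<bar>kl_term p q r\<bar> \<le> 1"
proof (cases "p = 0")
  case False
  then have pos: "0 < p" "0 < q" "0 < r" using assms by auto
  have split: "kl_term p q r = kl_term p q 1 + p * ln (1 / r)"
    using pos by (simp add: kl_term_def ln_div ln_mult algebra_simps)
  have "p - q \<le> kl_term p q 1"
    using kl_term_ge_diff[of p q 1] pos by simp
  moreover have "kl_term p q 1 \<le> 0"
    using pos assms by (auto simp: kl_term_def intro!: mult_nonneg_nonpos)
  moreover have "0 \<le> p * ln (1 / r)"
    using pos assms by simp
  moreover have "p * ln (1 / r) \<le> r * ln (1 / r)"
    using pos assms by (intro mult_right_mono) auto
  moreover have "r * ln (1 / r) \<le> r * (1 / r - 1)"
    using pos by (intro mult_left_mono ln_le_minus_one) auto
  moreover have "r * (1 / r - 1) = 1 - r"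
    using pos by (simp add: field_simps)
  ultimately show ?thesis
    using pos assms unfolding split abs_le_iff by linarith
qed (simp add: kl_term_def)

lemma kl_term_tangent_plane:
  fixes p\<^sub>0 q\<^sub>0 c :: real
  defines "a \<equiv> if 0 < p\<^sub>0 then ln (p\<^sub>0 / (q\<^sub>0 * c)) + 1 else 0"
    and "b \<equiv> if 0 < p\<^sub>0 then p\<^sub>0 / q\<^sub>0 else 0"
  assumes "0 \<le> p\<^sub>0" "p\<^sub>0 \<le> q\<^sub>0" "q\<^sub>0 \<le> 1" "p\<^sub>0 \<le> c" "c \<le> 1"
  shows "a * p\<^sub>0 - b * q\<^sub>0 = kl_term p\<^sub>0 q\<^sub>0 c"
    and "0 \<le> b" "b \<le> 1" "\<bar>a * p\<^sub>0\<bar> \<le> 2"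
    and "\<And>p q. 0 \<le> p \<Longrightarrow> p \<le> q \<Longrightarrow> (p\<^sub>0 = 0 \<Longrightarrow> p = 0) \<Longrightarrow> a * p - b * q \<le> kl_term p q c"
proof -
  show base: "a * p\<^sub>0 - b * q\<^sub>0 = kl_term p\<^sub>0 q\<^sub>0 c"
    using assms by (auto simp: a_def b_def kl_term_def field_simps)
  show "0 \<le> b" "b \<le> 1"
    using assms by (auto simp: b_def)
  then have "\<bar>b * q\<^sub>0\<bar> \<le> 1"
    using assms by (auto simp: abs_mult intro: mult_le_one)
  moreover have "\<bar>kl_term p\<^sub>0 q\<^sub>0 c\<bar> \<le> 1"
    using assms by (intro abs_kl_term_le_1) auto
  ultimately show "\<bar>a * p\<^sub>0\<bar> \<le> 2"
    using base by linarith
  show "a * p - b * q \<le> kl_term p q c" if "0 \<le> p" "p \<le> q" "p\<^sub>0 = 0 \<Longrightarrow> p = 0" for p q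
  proof (cases "0 < p\<^sub>0")
    case True
    then show ?thesis
      using kl_term_ge_tangent[of c p\<^sub>0 q\<^sub>0 p q] assms that by (simp add: a_def b_def mult.commute)
  qed (use assms that in \<open>simp add: a_def b_def kl_term_def\<close>)
qed

text \<open>Gibbs' inequality. Only the row sums of \<open>p\<close> and the normalisation of \<open>r\<close> enter;
  \<open>q\<close> need not sum to one.\<close>
lemma sum_kl_term_nonneg:
  fixes p :: "'x \<Rightarrow> 'y \<Rightarrow> real" and q :: "'x \<Rightarrow> real" and r :: "'y \<Rightarrow> real"
  assumes "\<And>A B. A \<in> P \<Longrightarrow> B \<in> Q \<Longrightarrow> 0 \<le> p A B \<and> p A B \<le> q A \<and> p A B \<le> r B"
    and "\<And>A. A \<in> P \<Longrightarrow> (\<Sum>B\<in>Q. p A B) = q A" and "(\<Sum>B\<in>Q. r B) = 1"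
  shows "0 \<le> (\<Sum>A\<in>P. \<Sum>B\<in>Q. kl_term (p A B) (q A) (r B))"
proof -
  have "(\<Sum>A\<in>P. \<Sum>B\<in>Q. p A B - q A * r B) \<le> (\<Sum>A\<in>P. \<Sum>B\<in>Q. kl_term (p A B) (q A) (r B))"
    using assms(1) by (intro sum_mono kl_term_ge_diff) force+
  moreover have "(\<Sum>B\<in>Q. p A B - q A * r B) = 0" if "A \<in> P" for A
    using assms(2)[OF that] assms(3) by (simp add: sum_subtractf flip: sum_distrib_left)
  ultimately show ?thesis by simp
qed

lemma measurable_kl_term [measurable (raw)]:
  assumes [measurable]: "f \<in> borel_measurable N" "g \<in> borel_measurable N" "h \<in> borel_measurable N"
  shows "(\<lambda>x. kl_term (f x) (g x) (h x)) \<in> borel_measurable N"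
  unfolding kl_term_def by measurable

section \<open>Conditional expectations\<close>

context sigma_finite_subalgebra
begin

text \<open>Converse of \<open>real_cond_exp_intg\<close>: the truncations \<open>min f k\<close> satisfy it, and the limit is
  taken by dominated convergence on the conditional side and monotone convergence on the other.\<close>
lemma real_cond_exp_intg_rev_fpos:
  assumes [measurable]: "f \<in> borel_measurable F" and f_nonneg: "\<And>x. 0 \<le> f x"
    and g: "integrable M g" and g_nonneg: "AE x in M. 0 \<le> g x"
    and fg: "integrable M (\<lambda>x. f x * real_cond_exp M F g x)"
  shows "integrable M (\<lambda>x. f x * g x)"
    and "(\<integral>x. f x * g x \<partial>M) = (\<integral>x. f x * real_cond_exp M F g x \<partial>M)"
proof -
  have [measurable]: "f \<in> borel_measurable M"
    by (rule measurable_from_subalg[OF subalg]) simp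
  have [measurable]: "g \<in> borel_measurable M"
    using g by auto
  define f' where "f' k x = min (f x) (real k)" for k x
  have [measurable]: "f' k \<in> borel_measurable F" "f' k \<in> borel_measurable M" for k
    unfolding f'_def by measurable
  have int_f'g: "integrable M (\<lambda>x. f' k x * g x)" for k
    by (rule Bochner_Integration.integrable_bound[where f="\<lambda>x. real k * g x"])
       (use g f_nonneg in \<open>auto simp: f'_def abs_mult intro!: mult_right_mono\<close>)
  have f'_lim: "(\<lambda>k. f' k x) \<longlonglongrightarrow> f x" for x
  proof (rule tendsto_eventually)
    obtain N :: nat where "f x \<le> real N" using real_arch_simple by blast
    then show "\<forall>\<^sub>F k in sequentially. f' k x = f x"
      unfolding f'_def eventually_sequentially by (intro exI[of _ N]) (auto intro: order_trans)
  qed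
  have "(\<lambda>k. \<integral>x. f' k x * real_cond_exp M F g x \<partial>M) \<longlonglongrightarrow> (\<integral>x. f x * real_cond_exp M F g x \<partial>M)"
  proof (rule integral_dominated_convergence[where w="\<lambda>x. norm (f x * real_cond_exp M F g x)"])
    show "AE x in M. (\<lambda>k. f' k x * real_cond_exp M F g x) \<longlonglongrightarrow> f x * real_cond_exp M F g x"
      using f'_lim by (auto intro!: tendsto_mult)
    show "AE x in M. norm (f' k x * real_cond_exp M F g x) \<le> norm (f x * real_cond_exp M F g x)" for k
      using f_nonneg by (auto simp: f'_def abs_mult intro!: mult_right_mono)
  qed (use fg in auto)
  moreover have "(\<integral>x. f' k x * real_cond_exp M F g x \<partial>M) = (\<integral>x. f' k x * g x \<partial>M)" for k
    using real_cond_exp_intg(2)[OF int_f'g] by simp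
  ultimately have lim: "(\<lambda>k. \<integral>x. f' k x * g x \<partial>M) \<longlonglongrightarrow> (\<integral>x. f x * real_cond_exp M F g x \<partial>M)"
    by simp
  have mono: "AE x in M. mono (\<lambda>k. f' k x * g x)"
    using g_nonneg by eventually_elim (auto simp: mono_def f'_def intro!: mult_right_mono)
  have nonneg: "AE x in M. 0 \<le> f' k x * g x" for k
    using g_nonneg by eventually_elim (simp add: f'_def f_nonneg)
  have "AE x in M. (\<lambda>k. f' k x * g x) \<longlonglongrightarrow> f x * g x"
    using f'_lim by (auto intro!: tendsto_mult)
  note monotone_convergence = integral_monotone_convergence_nonneg[OF int_f'g mono nonneg this lim]
  show "integrable M (\<lambda>x. f x * g x)"
    by (rule monotone_convergence(1)) measurable
  show "(\<integral>x. f x * g x \<partial>M) = (\<integral>x. f x * real_cond_exp M F g x \<partial>M)"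
    by (rule monotone_convergence(2)) measurable
qed

lemma real_cond_exp_intg_rev:
  assumes [measurable]: "f \<in> borel_measurable F"
    and g: "integrable M g" "AE x in M. 0 \<le> g x"
    and fg: "integrable M (\<lambda>x. f x * real_cond_exp M F g x)"
  shows "integrable M (\<lambda>x. f x * g x)"
    and "(\<integral>x. f x * g x \<partial>M) = (\<integral>x. f x * real_cond_exp M F g x \<partial>M)"
proof -
  define f\<^sub>p f\<^sub>m where "f\<^sub>p x = max (f x) 0" and "f\<^sub>m x = max (- f x) 0" for x
  have f_eq: "f x = f\<^sub>p x - f\<^sub>m x" for x
    by (auto simp: f\<^sub>p_def f\<^sub>m_def)
  have parts_meas [measurable]: "f\<^sub>p \<in> borel_measurable F" "f\<^sub>m \<in> borel_measurable F"
    unfolding f\<^sub>p_def f\<^sub>m_def by measurable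
  have parts_nonneg: "0 \<le> f\<^sub>p x" "0 \<le> f\<^sub>m x" for x
    by (simp_all add: f\<^sub>p_def f\<^sub>m_def)
  have [measurable]: "f \<in> borel_measurable M"
    by (rule measurable_from_subalg[OF subalg]) simp
  have pos_int: "integrable M (\<lambda>x. f\<^sub>p x * real_cond_exp M F g x)"
    by (rule Bochner_Integration.integrable_bound[OF fg])
       (auto simp: f\<^sub>p_def abs_mult intro!: mult_right_mono)
  have neg_int: "integrable M (\<lambda>x. f\<^sub>m x * real_cond_exp M F g x)"
    by (rule Bochner_Integration.integrable_bound[OF fg])
       (auto simp: f\<^sub>m_def abs_mult intro!: mult_right_mono)
  note pos = real_cond_exp_intg_rev_fpos[OF parts_meas(1) parts_nonneg(1) g pos_int]
    and neg = real_cond_exp_intg_rev_fpos[OF parts_meas(2) parts_nonneg(2) g neg_int]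
  have "(\<lambda>x. f x * g x) = (\<lambda>x. f\<^sub>p x * g x - f\<^sub>m x * g x)"
    and "(\<lambda>x. f x * real_cond_exp M F g x) =
      (\<lambda>x. f\<^sub>p x * real_cond_exp M F g x - f\<^sub>m x * real_cond_exp M F g x)"
    by (simp_all add: f_eq left_diff_distrib)
  with pos neg pos_int neg_int
  show "integrable M (\<lambda>x. f x * g x)"
    and "(\<integral>x. f x * g x \<partial>M) = (\<integral>x. f x * real_cond_exp M F g x \<partial>M)"
    by simp_all
qed

text \<open>Integrate \<open>g\<close> against the indicator of \<open>{E[g|F] \<le> 0}\<close>.\<close>
lemma AE_eq_0_if_real_cond_exp_nonpos:
  assumes g: "integrable M g" "AE x in M. 0 \<le> g x"
  shows "AE x in M. real_cond_exp M F g x \<le> 0 \<longrightarrow> g x = 0"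
proof -
  define h where "h x = (if real_cond_exp M F g x \<le> 0 then 1 else 0 :: real)" for x
  have h_meas [measurable]: "h \<in> borel_measurable F"
    unfolding h_def by measurable
  have [measurable]: "h \<in> borel_measurable M" "g \<in> borel_measurable M"
    using measurable_from_subalg[OF subalg h_meas] g(1) by auto
  have hg: "integrable M (\<lambda>x. h x * g x)"
    by (rule Bochner_Integration.integrable_bound[OF g(1)]) (auto simp: h_def)
  have "0 \<le> (\<integral>x. - (h x * real_cond_exp M F g x) \<partial>M)"
    by (rule integral_nonneg_AE) (auto simp: h_def)
  moreover have "0 \<le> (\<integral>x. h x * g x \<partial>M)"
    by (rule integral_nonneg_AE) (use g(2) in \<open>auto simp: h_def\<close>)
  moreover have "(\<integral>x. h x * g x \<partial>M) = (\<integral>x. h x * real_cond_exp M F g x \<partial>M)"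
    using real_cond_exp_intg(2)[OF hg] by simp
  ultimately have "(\<integral>x. h x * g x \<partial>M) = 0"
    by simp
  moreover have "AE x in M. 0 \<le> h x * g x"
    using g(2) by eventually_elim (simp add: h_def)
  ultimately have "AE x in M. h x * g x = 0"
    using integral_nonneg_eq_0_iff_AE[OF hg] by simp
  then show ?thesis
  proof eventually_elim
    case (elim x)
    then show ?case by (cases "real_cond_exp M F g x \<le> 0") (simp_all add: h_def)
  qed
qed

end

lemma (in finite_measure) integrable_kl_term:
  assumes [measurable]: "p \<in> borel_measurable M" "q \<in> borel_measurable M" "r \<in> borel_measurable M"
    and "AE x in M. 0 \<le> p x \<and> p x \<le> q x \<and> q x \<le> 1 \<and> p x \<le> r x \<and> r x \<le> 1"
  shows "integrable M (\<lambda>x. kl_term (p x) (q x) (r x))"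
  by (rule integrable_const_bound[where B=1]) (use assms(4) in \<open>auto intro: abs_kl_term_le_1\<close>)

context finite_measure_subalgebra
begin

lemma integrable_indicator_event [simp]:
  "E \<in> sets M \<Longrightarrow> integrable M (indicator E :: 'a \<Rightarrow> real)"
  by (rule integrable_real_indicator) (auto simp: less_top[symmetric])

lemma AE_real_cond_exp_indicator_mono:
  assumes "E \<in> sets M" "E' \<in> sets M" "E \<subseteq> E'"
  shows "AE x in M. 0 \<le> real_cond_exp M F (indicator E) x \<and>
    real_cond_exp M F (indicator E) x \<le> real_cond_exp M F (indicator E') x \<and>
    real_cond_exp M F (indicator E') x \<le> 1"
proof -
  have "AE x in M. 0 \<le> real_cond_exp M F (indicator E) x"
    using assms by (intro real_cond_exp_pos) auto
  moreover have "AE x in M. real_cond_exp M F (indicator E) x \<le> real_cond_exp M F (indicator E') x"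
    using assms by (intro real_cond_exp_mono) (auto simp: indicator_def)
  moreover have "AE x in M. real_cond_exp M F (indicator E') x \<le> 1"
    using assms by (intro real_cond_exp_le_c) (auto simp: indicator_def)
  ultimately show ?thesis by eventually_elim auto
qed

lemma real_cond_exp_indicator_indep:
  assumes E: "E \<in> sets M" and indep: "\<And>A. A \<in> sets F \<Longrightarrow> measure M (A \<inter> E) = measure M A * measure M E"
  shows "AE x in M. real_cond_exp M F (indicator E) x = measure M E"
proof (rule real_cond_exp_charact)
  fix A assume A: "A \<in> sets F"
  then have "A \<in> sets M"
    using subalg by (auto simp: subalgebra_def)
  then have "(\<integral>x\<in>A. indicator E x \<partial>M) = measure M (A \<inter> E)"
    using E by (simp add: set_lebesgue_integral_def flip: indicator_inter_arith)
  then show "(\<integral>x\<in>A. indicator E x \<partial>M) = (\<integral>x\<in>A. measure M E \<partial>M)"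
    using \<open>A \<in> sets M\<close> indep[OF A] by (simp add: set_integral_const)
qed (use E in auto)

lemma real_cond_exp_indicator_UN:
  assumes I: "finite I" and E: "\<And>i. i \<in> I \<Longrightarrow> E i \<in> sets M" and disj: "disjoint_family_on E I"
  shows "AE x in M. (\<Sum>i\<in>I. real_cond_exp M F (indicator (E i)) x) =
    real_cond_exp M F (indicator (\<Union>i\<in>I. E i)) x"
proof -
  \<comment> \<open>\<open>real_cond_exp_sum\<close> wants every summand integrable, also outside \<open>I\<close>.\<close>
  define f where "f i = (if i \<in> I then indicator (E i) else (\<lambda>_. 0 :: real))" for i
  have "integrable M (f i)" for i
    using E by (simp add: f_def)
  then have "AE x in M. real_cond_exp M F (\<lambda>x. \<Sum>i\<in>I. f i x) x = (\<Sum>i\<in>I. real_cond_exp M F (f i) x)"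
    by (rule real_cond_exp_sum)
  moreover have "(\<lambda>x. \<Sum>i\<in>I. f i x) = indicator (\<Union>i\<in>I. E i)"
    by (simp add: f_def fun_eq_iff indicator_UN_disjoint[OF I disj])
  ultimately have "AE x in M. real_cond_exp M F (indicator (\<Union>i\<in>I. E i)) x =
      (\<Sum>i\<in>I. real_cond_exp M F (indicator (E i)) x)"
    by (simp add: f_def)
  then show ?thesis
    by eventually_elim simp
qed

lemma real_cond_exp_indicator_space: "AE x in M. real_cond_exp M F (indicator (space M)) x = 1"
proof -
  have "AE x in M. real_cond_exp M F (indicator (space M)) x = real_cond_exp M F (\<lambda>_. 1) x"
    by (intro real_cond_exp_cong) auto
  moreover have "AE x in M. real_cond_exp M F (\<lambda>_. 1) x = 1"
    by (intro real_cond_exp_F_meas) auto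
  ultimately show ?thesis by eventually_elim simp
qed

lemma AE_real_cond_exp_kl_bounds:
  assumes [measurable]: "p \<in> borel_measurable M" "q \<in> borel_measurable M"
    and bounds: "AE x in M. 0 \<le> p x \<and> p x \<le> q x \<and> q x \<le> 1 \<and> p x \<le> c"
  shows "AE x in M. 0 \<le> real_cond_exp M F p x \<and> real_cond_exp M F p x \<le> real_cond_exp M F q x \<and>
    real_cond_exp M F q x \<le> 1 \<and> real_cond_exp M F p x \<le> c \<and> (real_cond_exp M F p x = 0 \<longrightarrow> p x = 0)"
proof -
  have int: "integrable M p" "integrable M q"
    by (rule integrable_const_bound[where B=1]; use bounds in auto)+
  have "AE x in M. 0 \<le> real_cond_exp M F p x"
    using bounds by (intro real_cond_exp_pos) auto
  moreover have "AE x in M. real_cond_exp M F p x \<le> real_cond_exp M F q x"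
    using bounds by (intro real_cond_exp_mono int) auto
  moreover have "AE x in M. real_cond_exp M F q x \<le> 1"
    using bounds by (intro real_cond_exp_le_c int) auto
  moreover have "AE x in M. real_cond_exp M F p x \<le> c"
    using bounds by (intro real_cond_exp_le_c int) auto
  moreover have "AE x in M. real_cond_exp M F p x \<le> 0 \<longrightarrow> p x = 0"
    using bounds by (intro AE_eq_0_if_real_cond_exp_nonpos int) auto
  ultimately show ?thesis
    by eventually_elim auto
qed

text \<open>Conditional Jensen inequality for the jointly convex function \<open>(p, q) \<mapsto> p ln (p / (q c))\<close>,
  obtained by integrating its tangent plane at \<open>(E[p|F], E[q|F])\<close>.\<close>
lemma integral_kl_term_real_cond_exp_le:
  assumes [measurable]: "p \<in> borel_measurable M" "q \<in> borel_measurable M"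
    and bounds: "AE x in M. 0 \<le> p x \<and> p x \<le> q x \<and> q x \<le> 1 \<and> p x \<le> c" and "c \<le> 1"
  shows "(\<integral>x. kl_term (real_cond_exp M F p x) (real_cond_exp M F q x) c \<partial>M) \<le> (\<integral>x. kl_term (p x) (q x) c \<partial>M)"
proof -
  define p' q' where "p' = real_cond_exp M F p" and "q' = real_cond_exp M F q"
  define a b where "a x = (if 0 < p' x then ln (p' x / (q' x * c)) + 1 else 0)"
    and "b x = (if 0 < p' x then p' x / q' x else 0)" for x
  have [measurable]: "p' \<in> borel_measurable M" "q' \<in> borel_measurable M"
    by (simp_all add: p'_def q'_def)
  have a_meas [measurable]: "a \<in> borel_measurable F" and [measurable]: "b \<in> borel_measurable F"
    "a \<in> borel_measurable M" "b \<in> borel_measurable M"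
    unfolding a_def b_def p'_def q'_def by measurable
  have int_p: "integrable M p"
    by (rule integrable_const_bound[where B=1]) (use bounds in auto)
  have p_nonneg: "AE x in M. 0 \<le> p x"
    using bounds by (auto elim: eventually_mono)
  have bounds': "AE x in M. 0 \<le> p' x \<and> p' x \<le> q' x \<and> q' x \<le> 1 \<and> p' x \<le> c \<and> (p' x = 0 \<longrightarrow> p x = 0)"
    unfolding p'_def q'_def using bounds by (rule AE_real_cond_exp_kl_bounds[rotated 2]) simp_all
  have tangent_plane: "AE x in M. (a x * p' x - b x * q' x = kl_term (p' x) (q' x) c \<and>
      0 \<le> b x \<and> b x \<le> 1 \<and> \<bar>a x * p' x\<bar> \<le> 2) \<and> a x * p x - b x * q x \<le> kl_term (p x) (q x) c"
    using bounds bounds' unfolding a_def b_def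
    by eventually_elim (intro conjI kl_term_tangent_plane; use \<open>c \<le> 1\<close> in auto)
  then have tangent: "AE x in M. a x * p x - b x * q x \<le> kl_term (p x) (q x) c"
    and kl': "AE x in M. a x * p' x - b x * q' x = kl_term (p' x) (q' x) c"
    by (auto elim: eventually_mono)
  have norm_bounds: "AE x in M. norm (a x * p' x) \<le> 2"
    "AE x in M. norm (b x * q x) \<le> 1" "AE x in M. norm (b x * q' x) \<le> 1"
    using tangent_plane bounds bounds' by (eventually_elim, auto simp: abs_mult intro: mult_le_one)+
  have int: "integrable M (\<lambda>x. a x * p' x)" "integrable M (\<lambda>x. b x * q x)" "integrable M (\<lambda>x. b x * q' x)"
    by (rule integrable_const_bound[OF norm_bounds(1)] integrable_const_bound[OF norm_bounds(2)]
        integrable_const_bound[OF norm_bounds(3)], measurable)+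
  note swap_p = real_cond_exp_intg_rev[OF a_meas int_p p_nonneg int(1)[unfolded p'_def]]
  have "(\<integral>x. kl_term (p' x) (q' x) c \<partial>M) = (\<integral>x. a x * p' x - b x * q' x \<partial>M)"
    using kl' by (intro integral_cong_AE) (auto simp: p'_def q'_def)
  also have "\<dots> = (\<integral>x. a x * p x \<partial>M) - (\<integral>x. b x * q x \<partial>M)"
    using swap_p bounds int real_cond_exp_intg(2)[OF int(2)] by (simp add: p'_def q'_def)
  also have "\<dots> = (\<integral>x. a x * p x - b x * q x \<partial>M)"
    using swap_p(1) int(2) by simp
  also have "\<dots> \<le> (\<integral>x. kl_term (p x) (q x) c \<partial>M)"
    using swap_p(1) bounds int(2) tangent \<open>c \<le> 1\<close> by (intro integral_mono_AE integrable_kl_term) auto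
  finally show ?thesis
    unfolding p'_def q'_def .
qed

end

section \<open>Conditioning on a finer independent variable\<close>

definition cmi_density ::
    "'a measure \<Rightarrow> 'a measure \<Rightarrow> ('a \<Rightarrow> 'b) \<Rightarrow> ('a \<Rightarrow> 'c) \<Rightarrow> 'b set set \<Rightarrow> 'c set set \<Rightarrow> 'a \<Rightarrow> real"
  where "cmi_density M F X Y P Q \<omega> = (\<Sum>A\<in>P. \<Sum>B\<in>Q.
    kl_term (real_cond_exp M F (indicator {x \<in> space M. X x \<in> A \<and> Y x \<in> B}) \<omega>)
            (real_cond_exp M F (indicator {x \<in> space M. X x \<in> A}) \<omega>)
            (real_cond_exp M F (indicator {x \<in> space M. Y x \<in> B}) \<omega>))"

lemma cmi_eq_SUP_cmi_density:
  "cmi M MX MY MZ X Y Z =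
    (SUP PQ \<in> {(P, Q). finite_meas_partition MX P \<and> finite_meas_partition MY Q}.
      \<integral>\<^sup>+\<omega>. ennreal (cmi_density M (vimage_algebra (space M) Z MZ) X Y (fst PQ) (snd PQ) \<omega>) \<partial>M)"
  unfolding cmi_def cmi_density_def cond_prob_def ..

lemma subalgebra_vimage_algebra: "Z \<in> measurable M N \<Longrightarrow> subalgebra M (vimage_algebra (space M) Z N)"
  unfolding subalgebra_def using sets_image_in_sets[OF refl] by simp

context finite_measure_subalgebra
begin

lemma real_cond_exp_indicator_partition:
  assumes Y: "Y \<in> measurable M MY" and Q: "finite_meas_partition MY Q"
    and E: "{x \<in> space M. P x} \<in> sets M"
  shows "AE x in M. (\<Sum>B\<in>Q. real_cond_exp M F (indicator {x \<in> space M. P x \<and> Y x \<in> B}) x) =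
    real_cond_exp M F (indicator {x \<in> space M. P x}) x"
proof -
  have Q: "finite Q" "Q \<subseteq> sets MY" "disjoint Q" "\<Union>Q = space MY"
    using Q by (auto simp: finite_meas_partition_def)
  have "{x \<in> space M. P x \<and> Y x \<in> B} = {x \<in> space M. P x} \<inter> (Y -` B \<inter> space M)" for B
    by auto
  then have "{x \<in> space M. P x \<and> Y x \<in> B} \<in> sets M" if "B \<in> Q" for B
    using that Q(2) E measurable_sets[OF Y] by auto
  moreover have "disjoint_family_on (\<lambda>B. {x \<in> space M. P x \<and> Y x \<in> B}) Q"
    using Q(3) by (auto simp: disjoint_family_on_def disjoint_def)
  moreover have "(\<Union>B\<in>Q. {x \<in> space M. P x \<and> Y x \<in> B}) = {x \<in> space M. P x}"
    using Q(4) measurable_space[OF Y] by auto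
  ultimately show ?thesis
    using real_cond_exp_indicator_UN[OF Q(1), of "\<lambda>B. {x \<in> space M. P x \<and> Y x \<in> B}"] by simp
qed

lemma AE_cmi_density_nonneg:
  assumes X [measurable]: "X \<in> measurable M MX" and Y [measurable]: "Y \<in> measurable M MY"
    and P: "finite P" "P \<subseteq> sets MX" and Q: "finite_meas_partition MY Q"
  shows "AE x in M. 0 \<le> cmi_density M F X Y P Q x"
proof -
  define ce where "ce E = real_cond_exp M F (indicator E)" for E
  define EA EB EAB where "EA A = {x \<in> space M. X x \<in> A}" and "EB B = {x \<in> space M. Y x \<in> B}"
    and "EAB A B = {x \<in> space M. X x \<in> A \<and> Y x \<in> B}" for A B
  have Q_sets: "finite Q" "Q \<subseteq> sets MY"
    using Q by (auto simp: finite_meas_partition_def)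
  have bounds: "AE x in M. 0 \<le> ce (EAB A B) x \<and> ce (EAB A B) x \<le> ce (EA A) x \<and> ce (EAB A B) x \<le> ce (EB B) x"
    if "A \<in> P" "B \<in> Q" for A B
  proof -
    have [measurable]: "A \<in> sets MX" "B \<in> sets MY"
      using that P Q_sets by auto
    have "EAB A B \<in> sets M" "EA A \<in> sets M" "EB B \<in> sets M" "EAB A B \<subseteq> EA A" "EAB A B \<subseteq> EB B"
      unfolding EA_def EB_def EAB_def by auto
    from AE_real_cond_exp_indicator_mono[OF this(1,2,4)] AE_real_cond_exp_indicator_mono[OF this(1,3,5)]
    show ?thesis
      unfolding ce_def by eventually_elim auto
  qed
  have "AE x in M. \<forall>A\<in>P. \<forall>B\<in>Q. 0 \<le> ce (EAB A B) x \<and> ce (EAB A B) x \<le> ce (EA A) x \<and> ce (EAB A B) x \<le> ce (EB B) x"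
    using P Q_sets bounds by (intro eventually_ball_finite ballI) auto
  moreover have "AE x in M. \<forall>A\<in>P. (\<Sum>B\<in>Q. ce (EAB A B) x) = ce (EA A) x"
    using P unfolding ce_def EA_def EAB_def
    by (intro eventually_ball_finite ballI real_cond_exp_indicator_partition[OF Y Q]) auto
  moreover have "AE x in M. (\<Sum>B\<in>Q. ce (EB B) x) = 1"
    using real_cond_exp_indicator_partition[OF Y Q, of "\<lambda>_. True", simplified] real_cond_exp_indicator_space
    unfolding ce_def EB_def by eventually_elim simp
  ultimately show ?thesis
    unfolding cmi_density_def ce_def[symmetric] EA_def[symmetric] EB_def[symmetric] EAB_def[symmetric]
    by eventually_elim (rule sum_kl_term_nonneg; blast)
qed

lemma integrable_kl_term_real_cond_exp_indicator:
  assumes "E \<in> sets M" "E' \<in> sets M" "B \<in> sets M" "E \<subseteq> E'" "E \<subseteq> B"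
  shows "integrable M (\<lambda>x. kl_term (real_cond_exp M F (indicator E) x)
    (real_cond_exp M F (indicator E') x) (real_cond_exp M F (indicator B) x))"
  using AE_real_cond_exp_indicator_mono[of E E'] AE_real_cond_exp_indicator_mono[of E B] assms
  by (intro integrable_kl_term) (auto elim: AE_mp)

lemma integral_cmi_density:
  assumes [measurable]: "X \<in> measurable M MX" "Y \<in> measurable M MY"
    and P: "finite P" "P \<subseteq> sets MX" and Q: "finite Q" "Q \<subseteq> sets MY"
  shows "integrable M (cmi_density M F X Y P Q)"
    and "(\<integral>x. cmi_density M F X Y P Q x \<partial>M) = (\<Sum>A\<in>P. \<Sum>B\<in>Q. \<integral>x.
      kl_term (real_cond_exp M F (indicator {x \<in> space M. X x \<in> A \<and> Y x \<in> B}) x)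
              (real_cond_exp M F (indicator {x \<in> space M. X x \<in> A}) x)
              (real_cond_exp M F (indicator {x \<in> space M. Y x \<in> B}) x) \<partial>M)"
proof -
  have int: "integrable M (\<lambda>x. kl_term (real_cond_exp M F (indicator {x \<in> space M. X x \<in> A \<and> Y x \<in> B}) x)
      (real_cond_exp M F (indicator {x \<in> space M. X x \<in> A}) x)
      (real_cond_exp M F (indicator {x \<in> space M. Y x \<in> B}) x))"
    if "A \<in> P" "B \<in> Q" for A B
  proof -
    have [measurable]: "A \<in> sets MX" "B \<in> sets MY"
      using that P Q by auto
    show ?thesis
      by (rule integrable_kl_term_real_cond_exp_indicator) auto
  qed
  show "integrable M (cmi_density M F X Y P Q)"
    unfolding cmi_density_def[abs_def] by (intro Bochner_Integration.integrable_sum int)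
  show "(\<integral>x. cmi_density M F X Y P Q x \<partial>M) = (\<Sum>A\<in>P. \<Sum>B\<in>Q. \<integral>x.
      kl_term (real_cond_exp M F (indicator {x \<in> space M. X x \<in> A \<and> Y x \<in> B}) x)
              (real_cond_exp M F (indicator {x \<in> space M. X x \<in> A}) x)
              (real_cond_exp M F (indicator {x \<in> space M. Y x \<in> B}) x) \<partial>M)"
    unfolding cmi_density_def using int
    by (simp add: Bochner_Integration.integral_sum Bochner_Integration.integrable_sum)
qed

end

context prob_space
begin

lemma integral_kl_term_real_cond_exp_indicator_mono:
  assumes G: "subalgebra M G" and H: "subalgebra M H" and GH: "sets G \<subseteq> sets H"
    and events: "E \<in> events" "E' \<in> events" "B \<in> events" "E \<subseteq> E'" "E \<subseteq> B"
    and indep: "\<And>A. A \<in> sets H \<Longrightarrow> prob (A \<inter> B) = prob A * prob B"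
  shows "(\<integral>x. kl_term (real_cond_exp M G (indicator E) x) (real_cond_exp M G (indicator E') x)
      (real_cond_exp M G (indicator B) x) \<partial>M)
    \<le> (\<integral>x. kl_term (real_cond_exp M H (indicator E) x) (real_cond_exp M H (indicator E') x)
      (real_cond_exp M H (indicator B) x) \<partial>M)"
proof -
  interpret G: finite_measure_subalgebra M G
    by unfold_locales (rule G)
  interpret H: finite_measure_subalgebra M H
    by unfold_locales (rule H)
  have HG: "subalgebra H G"
    using G H GH by (auto simp: subalgebra_def)
  have const_H: "AE x in M. real_cond_exp M H (indicator B) x = prob B"
    using events(3) indep by (rule H.real_cond_exp_indicator_indep)
  have const_G: "AE x in M. real_cond_exp M G (indicator B) x = prob B"
    using events(3) indep GH by (intro G.real_cond_exp_indicator_indep) auto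
  have tower: "AE x in M. real_cond_exp M G (real_cond_exp M H (indicator S)) x = real_cond_exp M G (indicator S) x"
    if "S \<in> events" for S
    using that by (intro G.real_cond_exp_nested_subalg[OF H HG]) simp
  have "AE x in M. 0 \<le> real_cond_exp M H (indicator E) x \<and>
      real_cond_exp M H (indicator E) x \<le> real_cond_exp M H (indicator E') x \<and>
      real_cond_exp M H (indicator E') x \<le> 1 \<and> real_cond_exp M H (indicator E) x \<le> prob B"
    using H.AE_real_cond_exp_indicator_mono[OF events(1,2,4)]
      H.AE_real_cond_exp_indicator_mono[OF events(1,3,5)] const_H
    by eventually_elim auto
  then have "(\<integral>x. kl_term (real_cond_exp M G (real_cond_exp M H (indicator E)) x)
        (real_cond_exp M G (real_cond_exp M H (indicator E')) x) (prob B) \<partial>M)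
      \<le> (\<integral>x. kl_term (real_cond_exp M H (indicator E) x) (real_cond_exp M H (indicator E') x) (prob B) \<partial>M)"
    by (intro G.integral_kl_term_real_cond_exp_le) auto
  moreover have "(\<integral>x. kl_term (real_cond_exp M G (indicator E) x) (real_cond_exp M G (indicator E') x)
        (real_cond_exp M G (indicator B) x) \<partial>M)
      = (\<integral>x. kl_term (real_cond_exp M G (real_cond_exp M H (indicator E)) x)
        (real_cond_exp M G (real_cond_exp M H (indicator E')) x) (prob B) \<partial>M)"
    using tower[OF events(1)] tower[OF events(2)] const_G by (intro integral_cong_AE) auto
  moreover have "(\<integral>x. kl_term (real_cond_exp M H (indicator E) x) (real_cond_exp M H (indicator E') x) (prob B) \<partial>M)
      = (\<integral>x. kl_term (real_cond_exp M H (indicator E) x) (real_cond_exp M H (indicator E') x)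
        (real_cond_exp M H (indicator B) x) \<partial>M)"
    using const_H by (intro integral_cong_AE) auto
  ultimately show ?thesis
    by simp
qed

lemma nn_integral_cmi_density_mono:
  assumes G: "subalgebra M G" and H: "subalgebra M H" and GH: "sets G \<subseteq> sets H"
    and X [measurable]: "X \<in> measurable M MX" and Y [measurable]: "Y \<in> measurable M MY"
    and P: "finite_meas_partition MX P" and Q: "finite_meas_partition MY Q"
    and indep: "\<And>A B. A \<in> sets H \<Longrightarrow> B \<in> sets MY \<Longrightarrow>
      prob (A \<inter> {x \<in> space M. Y x \<in> B}) = prob A * prob {x \<in> space M. Y x \<in> B}"
  shows "(\<integral>\<^sup>+x. ennreal (cmi_density M G X Y P Q x) \<partial>M) \<le> (\<integral>\<^sup>+x. ennreal (cmi_density M H X Y P Q x) \<partial>M)"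
proof -
  interpret G: finite_measure_subalgebra M G
    by unfold_locales (rule G)
  interpret H: finite_measure_subalgebra M H
    by unfold_locales (rule H)
  have P': "finite P" "P \<subseteq> sets MX" and Q': "finite Q" "Q \<subseteq> sets MY"
    using P Q by (auto simp: finite_meas_partition_def)
  have "(\<integral>x. cmi_density M G X Y P Q x \<partial>M) \<le> (\<integral>x. cmi_density M H X Y P Q x \<partial>M)"
    unfolding G.integral_cmi_density(2)[OF X Y P' Q'] H.integral_cmi_density(2)[OF X Y P' Q']
  proof (intro sum_mono integral_kl_term_real_cond_exp_indicator_mono[OF G H GH])
    fix A B assume "A \<in> P" "B \<in> Q"
    then have [measurable]: "A \<in> sets MX" "B \<in> sets MY"
      using P' Q' by auto
    show "{x \<in> space M. X x \<in> A \<and> Y x \<in> B} \<in> events" "{x \<in> space M. X x \<in> A} \<in> events"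
      "{x \<in> space M. Y x \<in> B} \<in> events"
      by measurable
    show "prob (S \<inter> {x \<in> space M. Y x \<in> B}) = prob S * prob {x \<in> space M. Y x \<in> B}" if "S \<in> sets H" for S
      using that by (rule indep) measurable
  qed auto
  moreover have "(\<integral>\<^sup>+x. ennreal (cmi_density M F X Y P Q x) \<partial>M) = ennreal (\<integral>x. cmi_density M F X Y P Q x \<partial>M)"
    if "subalgebra M F" for F
  proof -
    interpret F: finite_measure_subalgebra M F
      by unfold_locales (rule that)
    show ?thesis
      using F.integral_cmi_density(1)[OF X Y P' Q'] F.AE_cmi_density_nonneg[OF X Y P' Q]
      by (intro nn_integral_eq_integral) auto
  qed
  ultimately show ?thesis
    using G H by (simp add: ennreal_leI)
qed

lemma prob_Int_eq_mult_if_distr_pair_eq: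
  assumes Z [measurable]: "Z \<in> measurable M MZ" and Y [measurable]: "Y \<in> measurable M MY"
    and indep: "distr M (MZ \<Otimes>\<^sub>M MY) (\<lambda>\<omega>. (Z \<omega>, Y \<omega>)) = distr M MZ Z \<Otimes>\<^sub>M distr M MY Y"
    and A: "A \<in> sets (vimage_algebra (space M) Z MZ)" and B: "B \<in> sets MY"
  shows "prob (A \<inter> {x \<in> space M. Y x \<in> B}) = prob A * prob {x \<in> space M. Y x \<in> B}"
proof -
  have "Z \<in> space M \<rightarrow> space MZ"
    using measurable_space[OF Z] by auto
  then obtain T where T: "T \<in> sets MZ" and A_eq: "A = Z -` T \<inter> space M"
    using A by (auto simp: sets_vimage_algebra2)
  have Y_B: "{x \<in> space M. Y x \<in> B} = Y -` B \<inter> space M"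
    by auto
  have "emeasure M (A \<inter> {x \<in> space M. Y x \<in> B}) = emeasure (distr M (MZ \<Otimes>\<^sub>M MY) (\<lambda>\<omega>. (Z \<omega>, Y \<omega>))) (T \<times> B)"
    using T B by (subst emeasure_distr) (auto simp: A_eq intro!: arg_cong[where f="emeasure M"])
  also have "\<dots> = emeasure (distr M MZ Z) T * emeasure (distr M MY Y) B"
    unfolding indep using T B
    by (intro sigma_finite_measure.emeasure_pair_measure_Times prob_space_imp_sigma_finite prob_space_distr Y)
       simp_all
  also have "\<dots> = emeasure M A * emeasure M {x \<in> space M. Y x \<in> B}"
    using T B by (simp add: emeasure_distr A_eq Y_B)
  finally show ?thesis
    by (simp add: emeasure_eq_measure flip: ennreal_mult)
qed

lemma cmi_le_cmi_if_indep:
  assumes X [measurable]: "X \<in> measurable M MX" and Y [measurable]: "Y \<in> measurable M MY"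
    and Z [measurable]: "Z \<in> measurable M MZ" and f [measurable]: "f \<in> measurable MZ MZ'"
    and indep: "distr M (MZ \<Otimes>\<^sub>M MY) (\<lambda>\<omega>. (Z \<omega>, Y \<omega>)) = distr M MZ Z \<Otimes>\<^sub>M distr M MY Y"
  shows "cmi M MX MY MZ' X Y (\<lambda>\<omega>. f (Z \<omega>)) \<le> cmi M MX MY MZ X Y Z"
  unfolding cmi_eq_SUP_cmi_density
proof (rule SUP_subset_mono[OF order_refl])
  fix PQ assume "PQ \<in> {(P, Q). finite_meas_partition MX P \<and> finite_meas_partition MY Q}"
  moreover have "sets (vimage_algebra (space M) (\<lambda>\<omega>. f (Z \<omega>)) MZ') \<subseteq> sets (vimage_algebra (space M) Z MZ)"
    using measurable_space[OF Z]
    by (intro sets_image_in_sets measurable_compose[OF measurable_vimage_algebra1 f]) auto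
  ultimately show "(\<integral>\<^sup>+\<omega>. ennreal (cmi_density M (vimage_algebra (space M) (\<lambda>\<omega>. f (Z \<omega>)) MZ') X Y (fst PQ) (snd PQ) \<omega>) \<partial>M)
      \<le> (\<integral>\<^sup>+\<omega>. ennreal (cmi_density M (vimage_algebra (space M) Z MZ) X Y (fst PQ) (snd PQ) \<omega>) \<partial>M)"
    by (intro nn_integral_cmi_density_mono subalgebra_vimage_algebra prob_Int_eq_mult_if_distr_pair_eq[OF Z Y indep]
        X Y) auto
qed

end

section \<open>Independence of samples and selectors\<close>

lemma (in prob_space) distr_pair_snd:
  assumes "sigma_finite_measure N"
  shows "distr (M \<Otimes>\<^sub>M N) N snd = N"
proof (intro measure_eqI)
  fix A assume A: "A \<in> sets (distr (M \<Otimes>\<^sub>M N) N snd)"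
  then have "emeasure (distr (M \<Otimes>\<^sub>M N) N snd) A = emeasure (M \<Otimes>\<^sub>M N) (space M \<times> A)"
    by (auto simp: emeasure_distr space_pair_measure dest: sets.sets_into_space
        intro!: arg_cong2[where f=emeasure])
  with A show "emeasure (distr (M \<Otimes>\<^sub>M N) N snd) A = emeasure N A"
    by (simp add: sigma_finite_measure.emeasure_pair_measure_Times[OF assms] emeasure_space_1)
qed simp

lemma (in prob_space) distr_pair_eq_pair_distr:
  assumes S: "prob_space S" and T: "prob_space T"
    and X: "random_variable S X" and Y: "random_variable T Y"
    and XY: "distr M (S \<Otimes>\<^sub>M T) (\<lambda>\<omega>. (X \<omega>, Y \<omega>)) = S \<Otimes>\<^sub>M T"
  shows "distr M (S \<Otimes>\<^sub>M T) (\<lambda>\<omega>. (X \<omega>, Y \<omega>)) = distr M S X \<Otimes>\<^sub>M distr M T Y"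
proof -
  have [measurable]: "random_variable (S \<Otimes>\<^sub>M T) (\<lambda>\<omega>. (X \<omega>, Y \<omega>))"
    using X Y by (rule measurable_Pair)
  have "distr M S X = distr (distr M (S \<Otimes>\<^sub>M T) (\<lambda>\<omega>. (X \<omega>, Y \<omega>))) S fst"
    by (subst distr_distr) (simp_all add: comp_def)
  also have "\<dots> = S"
    unfolding XY by (rule prob_space.distr_pair_fst[OF T])
  finally have "distr M S X = S" .
  moreover have "distr M T Y = distr (distr M (S \<Otimes>\<^sub>M T) (\<lambda>\<omega>. (X \<omega>, Y \<omega>))) T snd"
    by (subst distr_distr) (simp_all add: comp_def)
  moreover have "\<dots> = T"
    unfolding XY by (intro prob_space.distr_pair_snd[OF S] prob_space_imp_sigma_finite[OF T])
  ultimately show ?thesis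
    using XY by simp
qed

lemma (in prob_space) distr_pair_comp_eq_pair_distr:
  assumes [measurable]: "random_variable S X" "random_variable T Y" "f \<in> measurable S S'" "g \<in> measurable T T'"
    and indep: "distr M (S \<Otimes>\<^sub>M T) (\<lambda>\<omega>. (X \<omega>, Y \<omega>)) = distr M S X \<Otimes>\<^sub>M distr M T Y"
  shows "distr M (S' \<Otimes>\<^sub>M T') (\<lambda>\<omega>. (f (X \<omega>), g (Y \<omega>))) =
    distr M S' (\<lambda>\<omega>. f (X \<omega>)) \<Otimes>\<^sub>M distr M T' (\<lambda>\<omega>. g (Y \<omega>))"
proof -
  have "distr M (S' \<Otimes>\<^sub>M T') (\<lambda>\<omega>. (f (X \<omega>), g (Y \<omega>))) =
      distr (distr M (S \<Otimes>\<^sub>M T) (\<lambda>\<omega>. (X \<omega>, Y \<omega>))) (S' \<Otimes>\<^sub>M T') (\<lambda>(x, y). (f x, g y))"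
    by (subst distr_distr) (auto simp: comp_def)
  also have "\<dots> = distr (distr M S X) S' f \<Otimes>\<^sub>M distr (distr M T Y) T' g"
    unfolding indep
    by (intro pair_measure_distr[symmetric] prob_space_imp_sigma_finite prob_space.prob_space_distr
        prob_space_distr) auto
  also have "\<dots> = distr M S' (\<lambda>\<omega>. f (X \<omega>)) \<Otimes>\<^sub>M distr M T' (\<lambda>\<omega>. g (Y \<omega>))"
    by (simp add: distr_distr comp_def)
  finally show ?thesis .
qed

lemma distr_pair_measure_assoc:
  assumes M1: "prob_space M1" and M2: "prob_space M2" and M3: "prob_space M3"
  shows "distr (M1 \<Otimes>\<^sub>M (M2 \<Otimes>\<^sub>M M3)) ((M1 \<Otimes>\<^sub>M M2) \<Otimes>\<^sub>M M3) (\<lambda>(x, y, z). ((x, y), z)) =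
    (M1 \<Otimes>\<^sub>M M2) \<Otimes>\<^sub>M M3"
proof (rule pair_measure_eqI[symmetric])
  interpret M2: prob_space M2 by (rule M2)
  interpret M3: prob_space M3 by (rule M3)
  interpret M23: prob_space "M2 \<Otimes>\<^sub>M M3" by (intro prob_space_pair M2 M3)
  interpret M12: prob_space "M1 \<Otimes>\<^sub>M M2" by (intro prob_space_pair M1 M2)
  show "sigma_finite_measure (M1 \<Otimes>\<^sub>M M2)" "sigma_finite_measure M3"
    by unfold_locales
  fix T B assume T [measurable]: "T \<in> sets (M1 \<Otimes>\<^sub>M M2)" and B [measurable]: "B \<in> sets M3"
  define C where "C = {t \<in> space (M1 \<Otimes>\<^sub>M (M2 \<Otimes>\<^sub>M M3)). (fst t, fst (snd t)) \<in> T \<and> snd (snd t) \<in> B}"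
  have C [measurable]: "C \<in> sets (M1 \<Otimes>\<^sub>M (M2 \<Otimes>\<^sub>M M3))"
    unfolding C_def by measurable
  have slice: "Pair x -` C = (Pair x -` T) \<times> B" if "x \<in> space M1" for x
    using that sets.sets_into_space[OF T] sets.sets_into_space[OF B]
    by (auto simp: C_def space_pair_measure)
  have "emeasure (distr (M1 \<Otimes>\<^sub>M (M2 \<Otimes>\<^sub>M M3)) ((M1 \<Otimes>\<^sub>M M2) \<Otimes>\<^sub>M M3) (\<lambda>(x, y, z). ((x, y), z))) (T \<times> B)
      = emeasure (M1 \<Otimes>\<^sub>M (M2 \<Otimes>\<^sub>M M3)) C"
    by (subst emeasure_distr) (auto simp: C_def intro!: arg_cong[where f="emeasure _"])
  also have "\<dots> = (\<integral>\<^sup>+x. emeasure (M2 \<Otimes>\<^sub>M M3) (Pair x -` C) \<partial>M1)"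
    by (rule M23.emeasure_pair_measure_alt[OF C])
  also have "\<dots> = (\<integral>\<^sup>+x. emeasure M2 (Pair x -` T) * emeasure M3 B \<partial>M1)"
    using slice M3.emeasure_pair_measure_Times[OF sets_Pair1[OF T] B] by (intro nn_integral_cong) simp
  also have "\<dots> = (\<integral>\<^sup>+x. emeasure M2 (Pair x -` T) \<partial>M1) * emeasure M3 B"
    by (rule nn_integral_multc) (rule M2.measurable_emeasure_Pair[OF T])
  also have "\<dots> = emeasure (M1 \<Otimes>\<^sub>M M2) T * emeasure M3 B"
    by (simp add: M2.emeasure_pair_measure_alt[OF T])
  finally show "emeasure (M1 \<Otimes>\<^sub>M M2) T * emeasure M3 B =
      emeasure (distr (M1 \<Otimes>\<^sub>M (M2 \<Otimes>\<^sub>M M3)) ((M1 \<Otimes>\<^sub>M M2) \<Otimes>\<^sub>M M3) (\<lambda>(x, y, z). ((x, y), z))) (T \<times> B)"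
    by simp
qed simp

lemma sets_rademacher [measurable_cong]: "sets rademacher = sets (count_space UNIV)"
  by (simp add: rademacher_def)

lemma prob_space_rademacher: "prob_space rademacher"
  by (simp add: rademacher_def prob_space_measure_pmf)

lemma measurable_train [measurable]:
  "(\<lambda>x. train I (fst x) (fst (snd x)) (snd (snd x))) \<in>
    measurable (PiM I (\<lambda>_. \<xi>) \<Otimes>\<^sub>M (PiM I (\<lambda>_. \<xi>) \<Otimes>\<^sub>M PiM I (\<lambda>_. rademacher))) (PiM I (\<lambda>_. \<xi>))"
  unfolding train_def by measurable

lemma distr_supersample_law:
  fixes \<xi> :: "'z measure" and n :: nat
  defines "N \<equiv> PiM {1..n} (\<lambda>_. \<xi>) \<Otimes>\<^sub>M (PiM {1..n} (\<lambda>_. \<xi>) \<Otimes>\<^sub>M PiM {1..n} (\<lambda>_. rademacher))"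
  assumes \<xi>: "prob_space \<xi>" and K [measurable]: "K \<in> measurable (PiM {1..n} (\<lambda>_. \<xi>)) (prob_algebra MW)"
  shows "distr (supersample_law \<xi> MW K n) N (\<lambda>(zm, zp, r, w). (zm, zp, r)) = N"
proof -
  define S where "S = PiM {1..n} (\<lambda>_. \<xi>) \<Otimes>\<^sub>M (PiM {1..n} (\<lambda>_. \<xi>) \<Otimes>\<^sub>M (PiM {1..n} (\<lambda>_. rademacher) \<Otimes>\<^sub>M MW))"
  define \<kappa> where "\<kappa> x = distr (K (train {1..n} (fst x) (fst (snd x)) (snd (snd x)))) S
      (\<lambda>w. (fst x, fst (snd x), snd (snd x), w))" for x
  have law: "supersample_law \<xi> MW K n = N \<bind> \<kappa>"
    unfolding supersample_law_def N_def S_def \<kappa>_def by (simp add: split_beta')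
  have K_train [measurable]:
    "(\<lambda>x. K (train {1..n} (fst x) (fst (snd x)) (snd (snd x)))) \<in> measurable N (prob_algebra MW)"
    unfolding N_def by measurable
  have \<kappa> [measurable]: "\<kappa> \<in> measurable N (subprob_algebra S)"
    unfolding \<kappa>_def
  proof (rule measurable_distr2[where f="\<lambda>x w. (fst x, fst (snd x), snd (snd x), w)" and M=MW])
    show "(\<lambda>(x, w). (fst x, fst (snd x), snd (snd x), w)) \<in> measurable (N \<Otimes>\<^sub>M MW) S"
      unfolding N_def S_def by measurable
  qed (rule measurable_prob_algebraD[OF K_train])
  have "distr (\<kappa> x) N (\<lambda>(zm, zp, r, w). (zm, zp, r)) = return N x" if x: "x \<in> space N" for x
  proof -
    obtain zm zp r where x_eq: "x = (zm, zp, r)"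
      by (cases x) auto
    have "K (train {1..n} zm zp r) \<in> space (prob_algebra MW)"
      using measurable_space[OF K_train x] by (simp add: x_eq)
    then have "prob_space (K (train {1..n} zm zp r))" and sets_K: "sets (K (train {1..n} zm zp r)) = sets MW"
      by (auto simp: space_prob_algebra)
    have "zm \<in> space (PiM {1..n} (\<lambda>_. \<xi>))" "zp \<in> space (PiM {1..n} (\<lambda>_. \<xi>))"
      "r \<in> space (PiM {1..n} (\<lambda>_. rademacher))"
      using x by (auto simp: x_eq N_def space_pair_measure)
    then have "(\<lambda>w. (zm, zp, r, w)) \<in> measurable (K (train {1..n} zm zp r)) S"
      unfolding measurable_cong_sets[OF sets_K refl] S_def
      by (intro measurable_Pair measurable_const measurable_ident_sets) auto
    then have "distr (\<kappa> x) N (\<lambda>(zm, zp, r, w). (zm, zp, r)) = distr (K (train {1..n} zm zp r)) N (\<lambda>_. x)"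
      unfolding \<kappa>_def x_eq by (subst distr_distr) (auto simp: comp_def S_def N_def)
    also have "\<dots> = return N x"
      using x by (rule prob_space.distr_const[OF \<open>prob_space (K (train {1..n} zm zp r))\<close>])
    finally show ?thesis .
  qed
  moreover have "space N \<noteq> {}"
    unfolding N_def by (intro prob_space.not_empty prob_space_pair prob_space_PiM prob_space_rademacher \<xi>)
  ultimately have "distr (supersample_law \<xi> MW K n) N (\<lambda>(zm, zp, r, w). (zm, zp, r)) = N \<bind> return N"
    unfolding law by (subst distr_bind[OF \<kappa>]) (auto simp: N_def S_def intro!: bind_cong)
  then show ?thesis
    by (simp add: bind_return'')
qed

lemma (in prob_space) distr_supersample_samples_selectors:
  fixes \<xi> :: "'z measure" and n :: nat
  assumes \<xi>: "prob_space \<xi>" and K: "K \<in> measurable (PiM {1..n} (\<lambda>_. \<xi>)) (prob_algebra MW)"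
    and V [measurable]: "V \<in> measurable M (PiM {1..n} (\<lambda>_. \<xi>) \<Otimes>\<^sub>M
      (PiM {1..n} (\<lambda>_. \<xi>) \<Otimes>\<^sub>M (PiM {1..n} (\<lambda>_. rademacher) \<Otimes>\<^sub>M MW)))"
    and law: "distr M (PiM {1..n} (\<lambda>_. \<xi>) \<Otimes>\<^sub>M
      (PiM {1..n} (\<lambda>_. \<xi>) \<Otimes>\<^sub>M (PiM {1..n} (\<lambda>_. rademacher) \<Otimes>\<^sub>M MW))) V = supersample_law \<xi> MW K n"
  shows "distr M ((PiM {1..n} (\<lambda>_. \<xi>) \<Otimes>\<^sub>M PiM {1..n} (\<lambda>_. \<xi>)) \<Otimes>\<^sub>M PiM {1..n} (\<lambda>_. rademacher))
      (\<lambda>\<omega>. ((fst (V \<omega>), fst (snd (V \<omega>))), fst (snd (snd (V \<omega>)))))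
    = (PiM {1..n} (\<lambda>_. \<xi>) \<Otimes>\<^sub>M PiM {1..n} (\<lambda>_. \<xi>)) \<Otimes>\<^sub>M PiM {1..n} (\<lambda>_. rademacher)"
proof -
  let ?Pz = "PiM {1..n} (\<lambda>_. \<xi>)" and ?Pr = "PiM {1..n} (\<lambda>_. rademacher)"
  define T where "T = (\<lambda>\<omega>. (fst (V \<omega>), fst (snd (V \<omega>)), fst (snd (snd (V \<omega>)))))"
  have T [measurable]: "T \<in> measurable M (?Pz \<Otimes>\<^sub>M (?Pz \<Otimes>\<^sub>M ?Pr))"
    unfolding T_def by measurable
  have "(\<lambda>(zm, zp, r, w). (zm, zp, r)) \<in> measurable (?Pz \<Otimes>\<^sub>M (?Pz \<Otimes>\<^sub>M (?Pr \<Otimes>\<^sub>M MW))) (?Pz \<Otimes>\<^sub>M (?Pz \<Otimes>\<^sub>M ?Pr))"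
    by measurable
  from distr_distr[OF this V] have T_law: "distr M (?Pz \<Otimes>\<^sub>M (?Pz \<Otimes>\<^sub>M ?Pr)) T = ?Pz \<Otimes>\<^sub>M (?Pz \<Otimes>\<^sub>M ?Pr)"
    unfolding law distr_supersample_law[OF \<xi> K] by (simp add: T_def comp_def split_beta')
  have "(\<lambda>(x, y, z). ((x, y), z)) \<in> measurable (?Pz \<Otimes>\<^sub>M (?Pz \<Otimes>\<^sub>M ?Pr)) ((?Pz \<Otimes>\<^sub>M ?Pz) \<Otimes>\<^sub>M ?Pr)"
    by measurable
  from distr_distr[OF this T]
  have "distr M ((?Pz \<Otimes>\<^sub>M ?Pz) \<Otimes>\<^sub>M ?Pr) (\<lambda>\<omega>. ((fst (V \<omega>), fst (snd (V \<omega>))), fst (snd (snd (V \<omega>))))) =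
      distr (?Pz \<Otimes>\<^sub>M (?Pz \<Otimes>\<^sub>M ?Pr)) ((?Pz \<Otimes>\<^sub>M ?Pz) \<Otimes>\<^sub>M ?Pr) (\<lambda>(x, y, z). ((x, y), z))"
    unfolding T_law by (simp add: T_def comp_def)
  also have "\<dots> = (?Pz \<Otimes>\<^sub>M ?Pz) \<Otimes>\<^sub>M ?Pr"
    by (intro distr_pair_measure_assoc prob_space_PiM \<xi> prob_space_rademacher)
  finally show ?thesis .
qed

lemma (in prob_space) distr_pairs_selector_eq_pair_distr:
  fixes \<xi> :: "'z measure" and n i :: nat
  assumes \<xi>: "prob_space \<xi>" and K: "K \<in> measurable (PiM {1..n} (\<lambda>_. \<xi>)) (prob_algebra MW)"
    and [measurable]: "\<And>j. j \<in> {1..n} \<Longrightarrow> Zm j \<in> measurable M \<xi>" "\<And>j. j \<in> {1..n} \<Longrightarrow> Zp j \<in> measurable M \<xi>"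
      "\<And>j. j \<in> {1..n} \<Longrightarrow> R j \<in> measurable M (count_space UNIV)" "W \<in> measurable M MW"
    and law: "distr M (PiM {1..n} (\<lambda>_. \<xi>) \<Otimes>\<^sub>M (PiM {1..n} (\<lambda>_. \<xi>) \<Otimes>\<^sub>M (PiM {1..n} (\<lambda>_. rademacher) \<Otimes>\<^sub>M MW)))
      (\<lambda>\<omega>. (\<lambda>j\<in>{1..n}. Zm j \<omega>, \<lambda>j\<in>{1..n}. Zp j \<omega>, \<lambda>j\<in>{1..n}. R j \<omega>, W \<omega>)) = supersample_law \<xi> MW K n"
    and i: "i \<in> {1..n}"
  shows "distr M (PiM {1..n} (\<lambda>_. \<xi> \<Otimes>\<^sub>M \<xi>) \<Otimes>\<^sub>M count_space UNIV)
      (\<lambda>\<omega>. (\<lambda>j\<in>{1..n}. (Zm j \<omega>, Zp j \<omega>), R i \<omega>))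
    = distr M (PiM {1..n} (\<lambda>_. \<xi> \<Otimes>\<^sub>M \<xi>)) (\<lambda>\<omega>. \<lambda>j\<in>{1..n}. (Zm j \<omega>, Zp j \<omega>)) \<Otimes>\<^sub>M
      distr M (count_space UNIV) (R i)"
proof -
  let ?Pz = "PiM {1..n} (\<lambda>_. \<xi>)" and ?Pr = "PiM {1..n} (\<lambda>_. rademacher)"
  define X Y where "X = (\<lambda>\<omega>. (\<lambda>j\<in>{1..n}. Zm j \<omega>, \<lambda>j\<in>{1..n}. Zp j \<omega>))" and "Y = (\<lambda>\<omega>. \<lambda>j\<in>{1..n}. R j \<omega>)"
  have X [measurable]: "X \<in> measurable M (?Pz \<Otimes>\<^sub>M ?Pz)" and Y [measurable]: "Y \<in> measurable M ?Pr"
    unfolding X_def Y_def by measurable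
  have "(\<lambda>\<omega>. (\<lambda>j\<in>{1..n}. Zm j \<omega>, \<lambda>j\<in>{1..n}. Zp j \<omega>, \<lambda>j\<in>{1..n}. R j \<omega>, W \<omega>)) \<in>
      measurable M (?Pz \<Otimes>\<^sub>M (?Pz \<Otimes>\<^sub>M (?Pr \<Otimes>\<^sub>M MW)))"
    by measurable
  from distr_supersample_samples_selectors[OF \<xi> K this law]
  have "distr M ((?Pz \<Otimes>\<^sub>M ?Pz) \<Otimes>\<^sub>M ?Pr) (\<lambda>\<omega>. (X \<omega>, Y \<omega>)) = (?Pz \<Otimes>\<^sub>M ?Pz) \<Otimes>\<^sub>M ?Pr"
    unfolding X_def Y_def by simp
  then have indep_XY:
    "distr M ((?Pz \<Otimes>\<^sub>M ?Pz) \<Otimes>\<^sub>M ?Pr) (\<lambda>\<omega>. (X \<omega>, Y \<omega>)) = distr M (?Pz \<Otimes>\<^sub>M ?Pz) X \<Otimes>\<^sub>M distr M ?Pr Y"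
    by (intro distr_pair_eq_pair_distr X Y prob_space_pair prob_space_PiM \<xi> prob_space_rademacher)
  have pairs: "(\<lambda>(zm, zp). \<lambda>j\<in>{1..n}. (zm j, zp j)) \<in> measurable (?Pz \<Otimes>\<^sub>M ?Pz) (PiM {1..n} (\<lambda>_. \<xi> \<Otimes>\<^sub>M \<xi>))"
    by measurable
  have select: "(\<lambda>r. r i) \<in> measurable ?Pr (count_space UNIV)"
    using i by measurable
  have "(\<lambda>(zm, zp). \<lambda>j\<in>{1..n}. (zm j, zp j)) (X \<omega>) = (\<lambda>j\<in>{1..n}. (Zm j \<omega>, Zp j \<omega>))"
    and "Y \<omega> i = R i \<omega>" for \<omega>
    using i by (auto simp: X_def Y_def fun_eq_iff)
  with distr_pair_comp_eq_pair_distr[OF X Y pairs select indep_XY] show ?thesis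
    by (simp only:)
qed

theorem lemma2:
  fixes M :: "'a measure" and \<xi> :: "'z measure" and MW :: "'w measure"
    and K :: "(nat \<Rightarrow> 'z) \<Rightarrow> 'w measure" and n i :: nat
    and Zm Zp :: "nat \<Rightarrow> 'a \<Rightarrow> 'z" and R :: "nat \<Rightarrow> 'a \<Rightarrow> int" and W :: "'a \<Rightarrow> 'w"
  assumes "prob_space M" and "prob_space \<xi>"
    and "K \<in> measurable (PiM {1..n} (\<lambda>_. \<xi>)) (prob_algebra MW)"
    and "\<And>j. j \<in> {1..n} \<Longrightarrow> Zm j \<in> measurable M \<xi>"
    and "\<And>j. j \<in> {1..n} \<Longrightarrow> Zp j \<in> measurable M \<xi>"
    and "\<And>j. j \<in> {1..n} \<Longrightarrow> R j \<in> measurable M (count_space UNIV)"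
    and "W \<in> measurable M MW"
    and "distr M (PiM {1..n} (\<lambda>_. \<xi>) \<Otimes>\<^sub>M (PiM {1..n} (\<lambda>_. \<xi>) \<Otimes>\<^sub>M
                   (PiM {1..n} (\<lambda>_. rademacher) \<Otimes>\<^sub>M MW)))
           (\<lambda>\<omega>. (\<lambda>j\<in>{1..n}. Zm j \<omega>, \<lambda>j\<in>{1..n}. Zp j \<omega>, \<lambda>j\<in>{1..n}. R j \<omega>, W \<omega>))
         = supersample_law \<xi> MW K n"
    and "i \<in> {1..n}"
  shows "cmi M MW (count_space UNIV) (\<xi> \<Otimes>\<^sub>M \<xi>) W (R i) (\<lambda>\<omega>. (Zm i \<omega>, Zp i \<omega>))
         \<le> cmi M MW (count_space UNIV) (PiM {1..n} (\<lambda>_. \<xi> \<Otimes>\<^sub>M \<xi>)) W (R i)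
              (\<lambda>\<omega>. \<lambda>j\<in>{1..n}. (Zm j \<omega>, Zp j \<omega>))"
proof -
  interpret prob_space M by fact
  note [measurable] = assms(4-7) and i = assms(9)
  have "(\<lambda>\<omega>. \<lambda>j\<in>{1..n}. (Zm j \<omega>, Zp j \<omega>)) \<in> measurable M (PiM {1..n} (\<lambda>_. \<xi> \<Otimes>\<^sub>M \<xi>))"
    by measurable
  from cmi_le_cmi_if_indep[OF assms(7) assms(6)[OF i] this measurable_component_singleton[OF i]
      distr_pairs_selector_eq_pair_distr[OF assms(2-9)]]
  show ?thesis
    using i by simp
qed

end
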